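(* Let $c>0$, $T_{\max}>0$, let $M,K\ge1$ be integers and $\bm{r}^{\mathrm{mic}}_1,\dots,\bm{r}^{\mathrm{mic}}_M\in\mathbb{R}^3$ with $E_M=\{\bm{r}^{\mathrm{mic}}_m\}$. Let $\kappa:\mathbb{R}\to\mathbb{R}$ be continuous with $\kappa(0)>0$ and $\lim_{|t|\to+\infty}\kappa(t)=0$, and assume $$\forall\tau\in[0,T_{\max}],\qquad\int_0^{T_{\max}}\kappa(t-\tau)\,dt>0.$$ Then there exists $N'\in\mathbb{N}^*$ such that for all integers $N\ge N'$ and $f_s>0$ with $T_{\max}=(N-1)/f_s$, the operator $\Gamma^K$ (built with these $N$ and $f_s$) is amplitude lower-bounded, i.e. there is $C>0$ with $\|\Gamma^K(\bm{a},\bm{r})\|_2\ge C\sum_{k=1}^K a_k$ for all $(\bm{a},\bm{r})\in\mathbb{R}_+^K\times\mathscr{C}^K$.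
   Context: $\mathbb{R}_+=[0,+\infty)$, $\|\cdot\|_2$ is the Euclidean norm. Given $N$ and $f_s$, for $\bm{r}\in\mathbb{R}^3\setminus E_M$, $\gamma(\bm{r})\in\mathbb{R}^{MN}$ has components $\gamma_{m,n}(\bm{r})=\dfrac{\kappa\big(n/f_s-\|\bm{r}-\bm{r}^{\mathrm{mic}}_m\|_2/c\big)}{4\pi\|\bm{r}-\bm{r}^{\mathrm{mic}}_m\|_2}$, $1\le m\le M$, $0\le n\le N-1$. $\mathscr{C}=\bigcap_{m=1}^M\overline{B(\bm{r}^{\mathrm{mic}}_m,cT_{\max})}\setminus E_M$. $\Gamma^K(\bm{a},\bm{r})=\sum_{k=1}^K a_k\gamma(\bm{r}_k)$. *)

theory Defs
  imports "HOL-Analysis.Analysis"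
begin

text \<open>Microphones are indexed 0..M-1 (paper: 1..M), sources 0..K-1 (paper: 1..K),
  time samples n = 0..N-1. Points of R^3 are of type real^3.\<close>

definition gamma_comp ::
  "real \<Rightarrow> (real \<Rightarrow> real) \<Rightarrow> (nat \<Rightarrow> real^3) \<Rightarrow> real \<Rightarrow> real^3 \<Rightarrow> nat \<Rightarrow> nat \<Rightarrow> real" where
  "gamma_comp c kappa rmic fs r m n =
     kappa (real n / fs - norm (r - rmic m) / c) / (4 * pi * norm (r - rmic m))"

definition Gamma_comp ::
  "real \<Rightarrow> (real \<Rightarrow> real) \<Rightarrow> (nat \<Rightarrow> real^3) \<Rightarrow> real \<Rightarrow> nat \<Rightarrow> (nat \<Rightarrow> real) \<Rightarrow> (nat \<Rightarrow> real^3)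
    \<Rightarrow> nat \<Rightarrow> nat \<Rightarrow> real" where
  "Gamma_comp c kappa rmic fs K a r m n = (\<Sum>k<K. a k * gamma_comp c kappa rmic fs (r k) m n)"

definition Gamma_norm ::
  "real \<Rightarrow> (real \<Rightarrow> real) \<Rightarrow> nat \<Rightarrow> (nat \<Rightarrow> real^3) \<Rightarrow> nat \<Rightarrow> real \<Rightarrow> nat \<Rightarrow> (nat \<Rightarrow> real)
    \<Rightarrow> (nat \<Rightarrow> real^3) \<Rightarrow> real" where
  "Gamma_norm c kappa M rmic N fs K a r =
     sqrt (\<Sum>m<M. \<Sum>n<N. (Gamma_comp c kappa rmic fs K a r m n)\<^sup>2)"

definition Cset :: "real \<Rightarrow> real \<Rightarrow> nat \<Rightarrow> (nat \<Rightarrow> real^3) \<Rightarrow> (real^3) set" where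
  "Cset c Tmax M rmic = (\<Inter>m<M. cball (rmic m) (c * Tmax)) - rmic ` {..<M}"

definition amplitude_lower_bounded ::
  "real \<Rightarrow> real \<Rightarrow> (real \<Rightarrow> real) \<Rightarrow> nat \<Rightarrow> (nat \<Rightarrow> real^3) \<Rightarrow> nat \<Rightarrow> real \<Rightarrow> nat \<Rightarrow> bool" where
  "amplitude_lower_bounded c Tmax kappa M rmic N fs K \<longleftrightarrow>
     (\<exists>C>0. \<forall>a r. (\<forall>k<K. a k \<ge> 0 \<and> r k \<in> Cset c Tmax M rmic) \<longrightarrow>
         Gamma_norm c kappa M rmic N fs K a r \<ge> C * (\<Sum>k<K. a k))"

end

theory Submission
  imports Defs
begin

text \<open>The shifted integrals \<open>I(\<tau>) = integral {0..Tmax} (\<lambda>t. \<kappa> (t - \<tau>))\<close> depend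
  continuously on \<open>\<tau>\<close>, so they are bounded below by some \<open>\<delta> > 0\<close> on \<open>[0, Tmax]\<close>. Left
  Riemann sums with mesh \<open>1/fs\<close> approximate them uniformly in \<open>\<tau>\<close>, hence for \<open>N\<close> large
  \<open>\<Sum>n<N. \<kappa> (n/fs - \<tau>) \<ge> fs \<delta>/2\<close> for all \<open>\<tau>\<close>. A source in \<open>Cset\<close> lies within
  \<open>c Tmax\<close> of every microphone, so at a fixed microphone the time samples of \<open>\<gamma>(r)\<close> sum to
  at least \<open>fs \<delta> / (8 \<pi> c Tmax)\<close>. For nonnegative amplitudes these sums add up over the
  sources, and Cauchy-Schwarz over the \<open>N\<close> samples turns the bound into one on the Euclidean
  norm.\<close>

lemma left_riemann_sum_error_le:
  fixes f :: "real \<Rightarrow> real"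
  assumes "continuous_on {0..real n * h} f" and h: "h > 0"
    and "\<And>i t. i < n \<Longrightarrow> t \<in> {real i * h..real (Suc i) * h} \<Longrightarrow> \<bar>f t - f (real i * h)\<bar> \<le> e"
  shows "\<bar>integral {0..real n * h} f - h * (\<Sum>i<n. f (real i * h))\<bar> \<le> real n * h * e"
  using assms(1,3)
proof (induction n)
  case 0
  then show ?case by simp
next
  case (Suc n)
  let ?a = "real n * h" and ?b = "real (Suc n) * h"
  have cont_0a: "continuous_on {0..?a} f"
    using h by (intro continuous_on_subset[OF Suc.prems(1)]) auto
  have cont_ab: "continuous_on {?a..?b} f"
    using h by (intro continuous_on_subset[OF Suc.prems(1)]) auto
  have IH: "\<bar>integral {0..?a} f - h * (\<Sum>i<n. f (real i * h))\<bar> \<le> ?a * e"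
    using Suc.IH cont_0a Suc.prems(2) by simp
  have "norm (integral {?a..?b} (\<lambda>t. f t - f ?a)) \<le> e * (?b - ?a)"
    using h Suc.prems(2) by (intro integral_bound continuous_on_diff cont_ab continuous_on_const) auto
  then have last: "\<bar>integral {?a..?b} f - h * f ?a\<bar> \<le> h * e"
    using h cont_ab by (simp add: integral_diff integrable_continuous_real algebra_simps)
  have "integral {0..?a} f + integral {?a..?b} f = integral {0..?b} f"
    using h Suc.prems(1) by (intro Henstock_Kurzweil_Integration.integral_combine integrable_continuous_real) auto
  then show ?case
    using IH last by (simp add: algebra_simps abs_le_iff)
qed

lemma shifted_riemann_sums_uniform:
  fixes \<kappa> :: "real \<Rightarrow> real"
  assumes cont: "continuous_on UNIV \<kappa>" and T: "T > 0" and e: "e > 0"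
  obtains \<eta> where "\<eta> > 0"
    and "\<And>n h \<tau>. 0 < h \<Longrightarrow> h < \<eta> \<Longrightarrow> real n * h = T \<Longrightarrow> \<tau> \<in> {0..T} \<Longrightarrow>
           \<bar>integral {0..T} (\<lambda>t. \<kappa> (t - \<tau>)) - h * (\<Sum>i\<le>n. \<kappa> (real i * h - \<tau>))\<bar> \<le> e"
proof -
  define S where "S = {-T..T}"
  have "uniformly_continuous_on S \<kappa>"
    unfolding S_def by (intro compact_uniformly_continuous continuous_on_subset[OF cont]) auto
  moreover have "e / (2 * T) > 0"
    using e T by simp
  ultimately obtain \<eta>1 where \<eta>1: "\<eta>1 > 0"
    and close: "\<And>x y. x \<in> S \<Longrightarrow> y \<in> S \<Longrightarrow> dist y x < \<eta>1 \<Longrightarrow> dist (\<kappa> y) (\<kappa> x) < e / (2 * T)"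
    unfolding uniformly_continuous_on_def by metis
  have "bounded (\<kappa> ` S)"
    unfolding S_def by (intro compact_imp_bounded compact_continuous_image continuous_on_subset[OF cont]) auto
  then obtain B where B: "B > 0" and bound: "\<And>x. x \<in> S \<Longrightarrow> \<bar>\<kappa> x\<bar> \<le> B"
    by (auto simp: bounded_pos)
  show thesis
  proof (rule that)
    show "min \<eta>1 (e / (2 * B)) > 0"
      using \<eta>1 e B by simp
    fix n h \<tau>
    assume h: "0 < h" "h < min \<eta>1 (e / (2 * B))" and nh: "real n * h = T" and \<tau>: "\<tau> \<in> {0..T}"
    have "\<bar>integral {0..real n * h} (\<lambda>t. \<kappa> (t - \<tau>)) - h * (\<Sum>i<n. \<kappa> (real i * h - \<tau>))\<bar>
        \<le> real n * h * (e / (2 * T))"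
    proof (rule left_riemann_sum_error_le)
      show "continuous_on {0..real n * h} (\<lambda>t. \<kappa> (t - \<tau>))"
        by (intro continuous_on_compose2[OF cont] continuous_intros) auto
      fix i t assume i: "i < n" and t: "t \<in> {real i * h..real (Suc i) * h}"
      define x where "x = real i * h"
      have "x + h = real (Suc i) * h"
        by (simp add: x_def algebra_simps)
      also have "\<dots> \<le> real n * h"
        using i h by (intro mult_right_mono) auto
      finally have "x + h \<le> T"
        using nh by simp
      moreover have "0 \<le> x" "x \<le> t" "t \<le> x + h"
        using h t by (auto simp: x_def algebra_simps)
      moreover have "h < \<eta>1"
        using h by simp
      ultimately have "t - \<tau> \<in> S" "x - \<tau> \<in> S" "dist (t - \<tau>) (x - \<tau>) < \<eta>1"
        using \<tau> unfolding S_def dist_real_def by auto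
      then show "\<bar>\<kappa> (t - \<tau>) - \<kappa> (real i * h - \<tau>)\<bar> \<le> e / (2 * T)"
        using close[of "x - \<tau>" "t - \<tau>"] by (simp add: x_def dist_real_def)
    qed (use h in auto)
    then have riemann: "\<bar>integral {0..T} (\<lambda>t. \<kappa> (t - \<tau>)) - h * (\<Sum>i<n. \<kappa> (real i * h - \<tau>))\<bar> \<le> e / 2"
      using nh T by simp
    have "\<bar>\<kappa> (real n * h - \<tau>)\<bar> \<le> B"
      using nh \<tau> by (intro bound) (auto simp: S_def)
    then have "\<bar>h * \<kappa> (real n * h - \<tau>)\<bar> \<le> h * B"
      using h by (simp add: abs_mult)
    also have "\<dots> \<le> e / 2"
      using h B by (simp add: less_divide_eq algebra_simps)
    finally have tail: "\<bar>h * \<kappa> (real n * h - \<tau>)\<bar> \<le> e / 2" .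
    have "h * (\<Sum>i\<le>n. \<kappa> (real i * h - \<tau>)) = h * (\<Sum>i<n. \<kappa> (real i * h - \<tau>)) + h * \<kappa> (real n * h - \<tau>)"
      by (simp add: lessThan_Suc_atMost[symmetric] distrib_left)
    then show "\<bar>integral {0..T} (\<lambda>t. \<kappa> (t - \<tau>)) - h * (\<Sum>i\<le>n. \<kappa> (real i * h - \<tau>))\<bar> \<le> e"
      using riemann tail unfolding abs_le_iff by linarith
  qed
qed

lemma continuous_on_shifted_integral:
  fixes \<kappa> :: "real \<Rightarrow> real"
  assumes "continuous_on UNIV \<kappa>"
  shows "continuous_on UNIV (\<lambda>\<tau>. integral {a..b} (\<lambda>t. \<kappa> (t - \<tau>)))"
  using integral_continuous_on_param[of UNIV a b "\<lambda>\<tau> t. \<kappa> (t - \<tau>)"]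
  by (simp add: case_prod_unfold continuous_on_compose2[OF assms] continuous_intros)

lemma shifted_integral_bounded_below:
  fixes \<kappa> :: "real \<Rightarrow> real"
  assumes "continuous_on UNIV \<kappa>" and "a \<le> b"
    and "\<forall>\<tau>\<in>{a..b}. integral {c..d} (\<lambda>t. \<kappa> (t - \<tau>)) > 0"
  obtains \<delta> where "\<delta> > 0" and "\<And>\<tau>. \<tau> \<in> {a..b} \<Longrightarrow> \<delta> \<le> integral {c..d} (\<lambda>t. \<kappa> (t - \<tau>))"
proof -
  have "\<exists>\<tau>0\<in>{a..b}. \<forall>\<tau>\<in>{a..b}. integral {c..d} (\<lambda>t. \<kappa> (t - \<tau>0)) \<le> integral {c..d} (\<lambda>t. \<kappa> (t - \<tau>))"
    using assms(2)
    by (intro continuous_attains_inf continuous_on_subset[OF continuous_on_shifted_integral[OF assms(1)]]) auto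
  then show thesis
    using assms(3) that by blast
qed

lemma sample_sums_bounded_below:
  fixes \<kappa> :: "real \<Rightarrow> real"
  assumes cont: "continuous_on UNIV \<kappa>" and T: "T > 0"
    and pos: "\<forall>\<tau>\<in>{0..T}. integral {0..T} (\<lambda>t. \<kappa> (t - \<tau>)) > 0"
  obtains \<delta> and N0 :: nat where "\<delta> > 0" and "N0 \<ge> 1"
    and "\<And>N fs \<tau>. N \<ge> N0 \<Longrightarrow> fs > 0 \<Longrightarrow> T = (real N - 1) / fs \<Longrightarrow> \<tau> \<in> {0..T} \<Longrightarrow>
           fs * \<delta> \<le> (\<Sum>n<N. \<kappa> (real n / fs - \<tau>))"
proof -
  obtain \<delta> where \<delta>: "\<delta> > 0" and min: "\<And>\<tau>. \<tau> \<in> {0..T} \<Longrightarrow> \<delta> \<le> integral {0..T} (\<lambda>t. \<kappa> (t - \<tau>))"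
    using shifted_integral_bounded_below[OF cont _ pos] T by auto
  obtain \<eta> where \<eta>: "\<eta> > 0" and approx: "\<And>n h \<tau>. 0 < h \<Longrightarrow> h < \<eta> \<Longrightarrow> real n * h = T \<Longrightarrow> \<tau> \<in> {0..T} \<Longrightarrow>
      \<bar>integral {0..T} (\<lambda>t. \<kappa> (t - \<tau>)) - h * (\<Sum>i\<le>n. \<kappa> (real i * h - \<tau>))\<bar> \<le> \<delta> / 2"
    using shifted_riemann_sums_uniform[OF cont T, of "\<delta> / 2"] \<delta> by auto
  obtain k :: nat where k: "T / \<eta> < real k"
    using reals_Archimedean2 by blast
  show thesis
  proof (rule that[of "\<delta> / 2" "Suc k"])
    fix N fs \<tau> assume "Suc k \<le> N" and fs: "fs > 0" and TN: "T = (real N - 1) / fs" and \<tau>: "\<tau> \<in> {0..T}"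
    define n where "n = N - 1"
    have N: "N = Suc n" and "k \<le> n" and nh: "real n * (1 / fs) = T"
      using \<open>Suc k \<le> N\<close> TN by (auto simp: n_def of_nat_diff)
    have "T < real k * \<eta>"
      using k \<eta> by (simp add: pos_divide_less_eq)
    also have "\<dots> \<le> real n * \<eta>"
      using \<open>k \<le> n\<close> \<eta> by (intro mult_right_mono) auto
    finally have mesh: "1 / fs < \<eta>"
      using nh by (metis mult_less_cancel_left_pos of_nat_0_le_iff order_le_less order_less_irrefl mult_zero_left)
    have "\<bar>integral {0..T} (\<lambda>t. \<kappa> (t - \<tau>)) - (\<Sum>i<N. \<kappa> (real i / fs - \<tau>)) / fs\<bar> \<le> \<delta> / 2"
      using approx[OF _ mesh nh \<tau>] fs by (simp add: N lessThan_Suc_atMost sum_divide_distrib)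
    then have "\<delta> / 2 \<le> (\<Sum>i<N. \<kappa> (real i / fs - \<tau>)) / fs"
      using min[OF \<tau>] unfolding abs_le_iff by linarith
    then show "fs * (\<delta> / 2) \<le> (\<Sum>n<N. \<kappa> (real n / fs - \<tau>))"
      using fs by (simp add: pos_le_divide_eq mult.commute)
  qed (use \<delta> in auto)
qed

lemma sum_gamma_comp_ge:
  assumes c: "c > 0" and L: "L \<ge> 0"
    and r: "r \<in> cball (rmic m) (c * T)" "r \<noteq> rmic m"
    and sums: "\<And>\<tau>. \<tau> \<in> {0..T} \<Longrightarrow> L \<le> (\<Sum>n<N. kappa (real n / fs - \<tau>))"
  shows "L / (4 * pi * c * T) \<le> (\<Sum>n<N. gamma_comp c kappa rmic fs r m n)"
proof -
  define d where "d = norm (r - rmic m)"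
  have d: "0 < d" "d \<le> c * T"
    using r by (auto simp: d_def dist_norm norm_minus_commute)
  then have "0 < c * T"
    by linarith
  then have "T > 0"
    using c by (simp add: zero_less_mult_iff)
  have "L / (4 * pi * (c * T)) \<le> L / (4 * pi * d)"
    using d L c \<open>T > 0\<close> by (intro divide_left_mono) auto
  also have "\<dots> \<le> (\<Sum>n<N. kappa (real n / fs - d / c)) / (4 * pi * d)"
    using sums[of "d / c"] d c by (intro divide_right_mono) (auto simp: field_simps)
  also have "\<dots> = (\<Sum>n<N. gamma_comp c kappa rmic fs r m n)"
    by (simp add: gamma_comp_def d_def sum_divide_distrib)
  finally show ?thesis
    by (simp add: mult.assoc)
qed

lemma Gamma_norm_ge_sum:
  assumes "m < M"
  shows "(\<Sum>n<N. Gamma_comp c kappa rmic fs K a r m n) / sqrt (real N) \<le> Gamma_norm c kappa M rmic N fs K a r"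
proof -
  let ?G = "Gamma_comp c kappa rmic fs K a r"
  have "((\<Sum>n<N. ?G m n) / sqrt (real N))\<^sup>2 \<le> (\<Sum>n<N. (?G m n)\<^sup>2)"
    using sum_squared_le_sum_of_squares[of "?G m" "{..<N}"]
    by (cases "N = 0") (auto simp: power_divide field_simps)
  also have "\<dots> \<le> (\<Sum>m'<M. \<Sum>n<N. (?G m' n)\<^sup>2)"
    using assms by (intro member_le_sum[of m "{..<M}" "\<lambda>m'. \<Sum>n<N. (?G m' n)\<^sup>2"]) (auto intro: sum_nonneg)
  finally show ?thesis
    unfolding Gamma_norm_def by (rule real_le_rsqrt)
qed

lemma amplitude_lower_boundedI:
  assumes m: "m < M" and \<beta>: "\<beta> > 0" and N: "N \<ge> 1"
    and gamma: "\<And>r. r \<in> Cset c T M rmic \<Longrightarrow> \<beta> \<le> (\<Sum>n<N. gamma_comp c kappa rmic fs r m n)"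
  shows "amplitude_lower_bounded c T kappa M rmic N fs K"
  unfolding amplitude_lower_bounded_def
proof (intro exI[of _ "\<beta> / sqrt (real N)"] conjI allI impI)
  show "\<beta> / sqrt (real N) > 0"
    using \<beta> N by simp
  fix a :: "nat \<Rightarrow> real" and r :: "nat \<Rightarrow> real^3"
  assume ar: "\<forall>k<K. 0 \<le> a k \<and> r k \<in> Cset c T M rmic"
  have "\<beta> * (\<Sum>k<K. a k) = (\<Sum>k<K. a k * \<beta>)"
    by (simp add: sum_distrib_left mult.commute)
  also have "\<dots> \<le> (\<Sum>k<K. a k * (\<Sum>n<N. gamma_comp c kappa rmic fs (r k) m n))"
    using ar gamma by (intro sum_mono mult_left_mono) auto
  also have "\<dots> = (\<Sum>n<N. Gamma_comp c kappa rmic fs K a r m n)"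
    by (simp add: Gamma_comp_def sum_distrib_left sum.swap[of _ "{..<N}"])
  finally have "\<beta> / sqrt (real N) * (\<Sum>k<K. a k)
      \<le> (\<Sum>n<N. Gamma_comp c kappa rmic fs K a r m n) / sqrt (real N)"
    by (simp add: divide_right_mono)
  also have "\<dots> \<le> Gamma_norm c kappa M rmic N fs K a r"
    using m by (rule Gamma_norm_ge_sum)
  finally show "\<beta> / sqrt (real N) * (\<Sum>k<K. a k) \<le> Gamma_norm c kappa M rmic N fs K a r" .
qed

theorem corollary2:
  fixes c Tmax :: real and M K :: nat and rmic :: "nat \<Rightarrow> real^3"
    and kappa :: "real \<Rightarrow> real"
  assumes "c > 0" and "Tmax > 0" and "M \<ge> 1" and "K \<ge> 1"
    and "continuous_on UNIV kappa" and "kappa 0 > 0"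
    and "(kappa \<longlongrightarrow> 0) at_infinity"
    and "\<forall>\<tau>\<in>{0..Tmax}. integral {0..Tmax} (\<lambda>t. kappa (t - \<tau>)) > 0"
  shows "\<exists>N'::nat. N' \<ge> 1 \<and>
           (\<forall>N::nat. \<forall>fs::real. N \<ge> N' \<and> fs > 0 \<and> Tmax = (real N - 1) / fs \<longrightarrow>
              amplitude_lower_bounded c Tmax kappa M rmic N fs K)"
proof -
  obtain \<delta> and N0 :: nat where \<delta>: "\<delta> > 0" and "N0 \<ge> 1"
    and sums: "\<And>N fs \<tau>. N \<ge> N0 \<Longrightarrow> fs > 0 \<Longrightarrow> Tmax = (real N - 1) / fs \<Longrightarrow> \<tau> \<in> {0..Tmax} \<Longrightarrow>
                 fs * \<delta> \<le> (\<Sum>n<N. kappa (real n / fs - \<tau>))"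
    using sample_sums_bounded_below[OF assms(5,2,8)] by blast
  have "amplitude_lower_bounded c Tmax kappa M rmic N fs K"
    if N: "N \<ge> N0" and fs: "fs > 0" and TN: "Tmax = (real N - 1) / fs" for N fs
  proof (rule amplitude_lower_boundedI[of 0 M "fs * \<delta> / (4 * pi * c * Tmax)"])
    show "0 < M" "1 \<le> N" "fs * \<delta> / (4 * pi * c * Tmax) > 0"
      using assms(1-3) \<open>N0 \<ge> 1\<close> N fs \<delta> by auto
    fix r assume "r \<in> Cset c Tmax M rmic"
    then have "r \<in> cball (rmic 0) (c * Tmax)" "r \<noteq> rmic 0"
      using assms(3) by (auto simp: Cset_def)
    then show "fs * \<delta> / (4 * pi * c * Tmax) \<le> (\<Sum>n<N. gamma_comp c kappa rmic fs r 0 n)"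
      using assms(1) fs \<delta> sums[OF N fs TN] by (intro sum_gamma_comp_ge) auto
  qed
  then show ?thesis
    using \<open>N0 \<ge> 1\<close> by blast
qed

end
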